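(* Let $\alpha,\beta<\omega^\omega$ and $m\in\mathbb{N}$. If $\alpha\le\beta$ and $\mathrm{MC}(\alpha)<m$, then $\alpha[m]\le\beta[m]$.
   Context: Ordinals $\alpha<\omega^\omega$ are written in Cantor normal form $\alpha=\omega^{n_0}+\dots+\omega^{n_{k-1}}$ with $n_0\ge\dots\ge n_{k-1}$, ordered as usual for ordinals. Writing $\alpha=\omega^{n}\cdot k_n+\dots+\omega^0\cdot k_0$ (with $\omega^j\cdot k$ the sum of $k$ copies of $\omega^j$), $\mathrm{MC}(\alpha)=\max\{k_n,\dots,k_0\}$. For $m\in\mathbb{N}$: $0[m]=0$, $(\beta+1)[m]=\beta$, and $(\beta+\omega^{n})[m]=\beta+\omega^{n-1}\cdot m$ for $n\ge1$ (with $\beta+\omega^n$ in Cantor normal form). *)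

theory Defs
  imports Main
begin

text \<open>Ordinals below omega^omega, represented by their Cantor normal form:
  the list [n_0, ..., n_(k-1)] stands for omega^n_0 + ... + omega^n_(k-1),
  required to be non-increasing.\<close>

type_synonym cnf_ord = "nat list"

definition is_cnf :: "cnf_ord \<Rightarrow> bool" where
  "is_cnf xs \<longleftrightarrow> sorted_wrt (\<ge>) xs"

fun ord_less :: "cnf_ord \<Rightarrow> cnf_ord \<Rightarrow> bool" where
  "ord_less [] [] = False"
| "ord_less [] (b # bs) = True"
| "ord_less (a # as) [] = False"
| "ord_less (a # as) (b # bs) = (a < b \<or> (a = b \<and> ord_less as bs))"

definition ord_le :: "cnf_ord \<Rightarrow> cnf_ord \<Rightarrow> bool" where
  "ord_le xs ys \<longleftrightarrow> ord_less xs ys \<or> xs = ys"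

text \<open>MC: the maximal coefficient k_j in omega^n*k_n + ... + omega^0*k_0
  (the coefficient of omega^j is the number of occurrences of j).\<close>
definition MC :: "cnf_ord \<Rightarrow> nat" where
  "MC xs = Max (insert 0 ((\<lambda>j. count_list xs j) ` set xs))"

text \<open>Fundamental sequence: 0[m]=0, (beta+1)[m]=beta,
  (beta+omega^(n+1))[m] = beta + omega^n * m.\<close>
definition fs :: "cnf_ord \<Rightarrow> nat \<Rightarrow> cnf_ord" where
  "fs xs m = (if xs = [] then []
              else (case last xs of
                      0 \<Rightarrow> butlast xs
                    | Suc n \<Rightarrow> butlast xs @ replicate m n))"

end

theory Submission
  imports Defs
begin

text \<open>If \<alpha> < \<beta> and \<beta> = \<gamma> + \<omega>^c, then either \<alpha> \<le> \<gamma>, and \<alpha>[m] \<le> \<alpha> \<le> \<gamma> \<le> \<beta>[m];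
  or \<alpha> = \<gamma> + \<delta> with every exponent of \<delta> below c. In the second case c = c' + 1 and
  \<beta>[m] = \<gamma> + \<omega>^c' \<cdot> m, while \<delta> has all exponents \<le> c' and contains \<omega>^c' at most
  MC(\<alpha>) < m times, so \<delta> < \<omega>^c' \<cdot> m and again \<alpha>[m] \<le> \<alpha> < \<beta>[m].\<close>

lemma ord_less_Nil_right [simp]: "\<not> ord_less xs []"
  by (cases xs) auto

lemma ord_less_append_left_iff: "ord_less (p @ xs) (p @ ys) \<longleftrightarrow> ord_less xs ys"
  by (induction p) auto

lemma ord_le_append_left_iff: "ord_le (p @ xs) (p @ ys) \<longleftrightarrow> ord_le xs ys"
  by (simp add: ord_le_def ord_less_append_left_iff)

lemma ord_le_append_self: "ord_le xs (xs @ ys)"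
  using ord_le_append_left_iff[of xs "[]" ys] by (cases ys) (auto simp: ord_le_def)

lemma ord_less_trans: "ord_less xs ys \<Longrightarrow> ord_less ys zs \<Longrightarrow> ord_less xs zs"
proof (induction xs arbitrary: ys zs)
  case Nil
  then show ?case by (cases zs) auto
next
  case (Cons a xs)
  then obtain b bs c cs where "ys = b # bs" "zs = c # cs"
    by (cases ys; cases zs) auto
  with Cons show ?case by auto
qed

lemma ord_le_trans: "ord_le xs ys \<Longrightarrow> ord_le ys zs \<Longrightarrow> ord_le xs zs"
  unfolding ord_le_def using ord_less_trans by blast

lemma ord_less_replicate:
  assumes "\<forall>x\<in>set xs. x \<le> c" and "count_list xs c < m"
  shows "ord_less xs (replicate m c)"
  using assms
proof (induction xs arbitrary: m)
  case Nil
  then show ?case by (cases m) auto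
next
  case (Cons x xs)
  then obtain m' where "m = Suc m'" by (cases m) auto
  with Cons show ?case by (cases "x = c") auto
qed

lemma ord_less_snoc_cases:
  assumes "ord_less \<alpha> (q @ [c])"
  shows "ord_le \<alpha> q \<or> (\<exists>a as. \<alpha> = q @ a # as \<and> a < c)"
  using assms
proof (induction q arbitrary: \<alpha>)
  case Nil
  then show ?case by (cases \<alpha>) (auto simp: ord_le_def)
next
  case (Cons x q)
  show ?case
  proof (cases \<alpha>)
    case Nil
    then show ?thesis by (simp add: ord_le_def)
  next
    case (Cons a as)
    with Cons.prems have "a < x \<or> a = x \<and> ord_less as (q @ [c])" by simp
    with Cons.IH[of as] Cons show ?thesis by (auto simp: ord_le_def)
  qed
qed

lemma count_list_le_MC: "count_list xs x \<le> MC xs"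
proof (cases "x \<in> set xs")
  case True
  then show ?thesis unfolding MC_def by (intro Max_ge) auto
next
  case False
  then show ?thesis by (simp add: count_list_0_iff)
qed

lemma fs_append: "xs \<noteq> [] \<Longrightarrow> fs (q @ xs) m = q @ fs xs m"
  by (simp add: fs_def butlast_append split: nat.split)

lemma fs_Suc_singleton: "fs [Suc c] m = replicate m c"
  by (simp add: fs_def)

lemma fs_ord_le: "ord_le (fs xs m) xs"
proof (cases xs rule: rev_exhaust)
  case Nil
  then show ?thesis by (simp add: fs_def ord_le_def)
next
  case (snoc q c)
  have "ord_le (fs [c] m) [c]"
    by (cases c; cases m) (auto simp: fs_def ord_le_def)
  with snoc show ?thesis by (simp add: fs_append ord_le_append_left_iff)
qed

lemma fs_mono_below_prefix:
  assumes "ord_le \<alpha> q"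
  shows "ord_le (fs \<alpha> m) (fs (q @ [c]) m)"
proof -
  have "ord_le q (fs (q @ [c]) m)"
    by (simp add: fs_append ord_le_append_self)
  with assms show ?thesis using fs_ord_le ord_le_trans by blast
qed

lemma fs_mono_lower_tail:
  assumes "is_cnf (q @ a # as)" and "a < Suc c" and "count_list (a # as) c < m"
  shows "ord_le (fs (q @ a # as) m) (fs (q @ [Suc c]) m)"
proof -
  have "\<forall>x\<in>set (a # as). x \<le> c"
    using assms(1,2) by (auto simp: is_cnf_def sorted_wrt_append)
  then have "ord_le (a # as) (replicate m c)"
    using ord_less_replicate assms(3) by (simp add: ord_le_def)
  then have "ord_le (fs (a # as) m) (fs [Suc c] m)"
    using fs_ord_le ord_le_trans fs_Suc_singleton by metis
  then show ?thesis
    by (simp add: fs_append ord_le_append_left_iff del: fs_Suc_singleton)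
qed

theorem lemma1p2:
  fixes \<alpha> \<beta> :: cnf_ord and m :: nat
  assumes "is_cnf \<alpha>" and "is_cnf \<beta>"
    and "ord_le \<alpha> \<beta>" and "MC \<alpha> < m"
  shows "ord_le (fs \<alpha> m) (fs \<beta> m)"
proof (cases "\<alpha> = \<beta>")
  case True
  then show ?thesis by (simp add: ord_le_def)
next
  case False
  with assms(3) have less: "ord_less \<alpha> \<beta>" by (simp add: ord_le_def)
  then obtain q c where \<beta>: "\<beta> = q @ [c]"
    by (cases \<beta> rule: rev_exhaust) auto
  from ord_less_snoc_cases[OF less[unfolded \<beta>]] show ?thesis
  proof
    assume "ord_le \<alpha> q"
    then show ?thesis unfolding \<beta> by (rule fs_mono_below_prefix)
  next
    assume "\<exists>a as. \<alpha> = q @ a # as \<and> a < c"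
    then obtain a as c' where \<alpha>: "\<alpha> = q @ a # as" and "a < Suc c'" and c: "c = Suc c'"
      by (metis less_nat_zero_code not0_implies_Suc)
    have "count_list (a # as) c' \<le> MC \<alpha>"
      using count_list_le_MC[of \<alpha> c'] by (simp add: \<alpha>)
    with assms(1,4) \<open>a < Suc c'\<close> show ?thesis
      unfolding \<alpha> \<beta> c by (intro fs_mono_lower_tail) auto
  qed
qed

end
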